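(* Let $m=x_{i_1}\cdots x_{i_s}$ ($i_1\le\dots\le i_s$, $s\ge1$) be a monomial of $S=k[x_1,\dots,x_n]$ and $B=\mathrm{Borel}(m)$. For $0\le d\le s-1$ let $c_d$ be the number of minimal monomial generators of $\operatorname{trunc}_d(B)$ of degree $d$ (so $c_0=1$). Then the Hilbert series of $S/B$ is \[\mathrm{HS}(S/B)=\sum_{d=0}^{s-1}\frac{c_d\,t^d}{(1-t)^{\,n-i_{d+1}}},\] and the multiplicity of $S/B$ is $e(S/B)=\sum_{d:\ i_{d+1}=i_1}c_d$.
   Context: $\mathrm{Borel}(m)$ is the smallest monomial ideal containing $m$ closed under Borel moves $\mu\mapsto\mu\frac{x_{a_1}}{x_{b_1}}\cdots\frac{x_{a_r}}{x_{b_r}}$ ($a_t<b_t$, all $x_{b_t}\mid\mu$). For a monomial $\mu=x_{k_1}\cdots x_{k_r}$ ($k_1\le\dots\le k_r$), $\operatorname{trunc}_d(\mu)=x_{k_1}\cdots x_{k_d}$ if $d\le r$ and $=\mu$ otherwise; $\operatorname{trunc}_d(I)$ is the ideal generated by the $d$-truncations of the monomials of $I$, with $\operatorname{trunc}_0(B)=(1)$. *)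

theory Defs
  imports "HOL-Library.Multiset" "HOL-Computational_Algebra.Formal_Power_Series"
    "HOL-Computational_Algebra.Polynomial" "HOL-Computational_Algebra.Polynomial_FPS"
begin

text \<open>A monomial x_{k_1}...x_{k_r} of S = k[x_1,...,x_n] is the multiset of its variable
  indices {#k_1,...,k_r#}; divisibility is multiset inclusion. A monomial ideal is identified
  with the set of monomials it contains.\<close>

definition monomials :: "nat \<Rightarrow> nat multiset set" where
  "monomials n = {\<mu>. set_mset \<mu> \<subseteq> {1..n}}"

text \<open>Borel(m): smallest monomial ideal containing m closed under Borel moves
  (a general Borel move is an iteration of elementary moves x_a/x_b, a<b, x_b | mu).\<close>
inductive_set Borel :: "nat \<Rightarrow> nat multiset \<Rightarrow> nat multiset set" for n m where
  gen: "m \<in> Borel n m"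
| mult: "\<mu> \<in> Borel n m \<Longrightarrow> j \<in> {1..n} \<Longrightarrow> \<mu> + {#j#} \<in> Borel n m"
| move: "\<mu> \<in> Borel n m \<Longrightarrow> b \<in># \<mu> \<Longrightarrow> 1 \<le> a \<Longrightarrow> a < b
           \<Longrightarrow> \<mu> - {#b#} + {#a#} \<in> Borel n m"

definition trunc_mono :: "nat \<Rightarrow> nat multiset \<Rightarrow> nat multiset" where
  "trunc_mono d \<mu> = mset (take d (sorted_list_of_multiset \<mu>))"

definition ideal_gen :: "nat \<Rightarrow> nat multiset set \<Rightarrow> nat multiset set" where
  "ideal_gen n G = {\<nu> \<in> monomials n. \<exists>g\<in>G. g \<subseteq># \<nu>}"

definition trunc_ideal :: "nat \<Rightarrow> nat \<Rightarrow> nat multiset set \<Rightarrow> nat multiset set" where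
  "trunc_ideal n d I = ideal_gen n (trunc_mono d ` I)"

definition min_gens :: "nat multiset set \<Rightarrow> nat multiset set" where
  "min_gens I = {\<mu> \<in> I. \<forall>\<nu>\<in>I. \<nu> \<subseteq># \<mu> \<longrightarrow> \<nu> = \<mu>}"

definition hilbert_series :: "nat \<Rightarrow> nat multiset set \<Rightarrow> rat fps" where
  "hilbert_series n I = Abs_fps (\<lambda>D. of_nat (card {\<mu> \<in> monomials n. size \<mu> = D \<and> \<mu> \<notin> I}))"

definition multiplicity :: "rat fps \<Rightarrow> rat" where
  "multiplicity h = (THE e. \<exists>Q \<delta>. poly Q 1 \<noteq> 0 \<and>
      h = fps_of_poly Q / (1 - fps_X) ^ \<delta> \<and> e = poly Q 1)"

end

theory Submission
  imports Defs
begin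

(* Write m = x_{i_1}...x_{i_s} with i_1 <= ... <= i_s and, for a monomial mu, let idx mu be
   the sorted list of its variable indices (lists are 0-indexed in the formal text, so
   i_{d+1} is i!d).

   A monomial mu lies in Borel(m) iff its s smallest indices
      are entrywise bounded by i, i.e. (idx mu)_j <= i_j for j < s.  Consequently
      trunc_d(Borel(m)) is generated by the degree-d monomials nu with (idx nu)_j <= i_j for
      j < d, and these are exactly its minimal generators of degree d; so c_d is their number.
   2. Counting standard monomials.  A monomial mu of degree D outside Borel(m) splits
      uniquely at the first position d < s where the bound fails (or mu runs out of
      variables): mu = nu * tau with nu a degree-d generator of trunc_d(Borel(m)) and tau an
      arbitrary monomial of degree D - d in x_{i_{d+1}+1}, ..., x_n.  Summing over d gives the
      coefficient of t^D in  sum_d c_d t^d / (1-t)^(n - i_{d+1}).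
   3. Multiplicity.  Bringing such a sum to the common denominator (1-t)^(n - i_1) gives a
      numerator whose value at t = 1 is the sum of the c_d with i_{d+1} = i_1; this value is
      positive since c_0 = 1, and the representation Q/(1-t)^delta with Q(1) /= 0 is unique. *)

abbreviation idx :: "nat multiset \<Rightarrow> nat list" where
  "idx \<equiv> sorted_list_of_multiset"

lemma length_idx: "length (idx \<mu>) = size \<mu>"
  by (metis size_mset mset_sorted_list_of_multiset)

lemma idx_mset_sorted: "sorted xs \<Longrightarrow> idx (mset xs) = xs"
  by (simp add: sorted_sort_id)

lemma mset_take_subseteq: "mset (take d xs) \<subseteq># mset xs"
  by (metis append_take_drop_id mset_append mset_subset_eq_add_left)

lemma mset_take_idx_subseteq: "mset (take d (idx \<mu>)) \<subseteq># \<mu>"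
  by (metis mset_take_subseteq mset_sorted_list_of_multiset)

lemma size_filter_mset_idx: "size (filter_mset P \<mu>) = length (filter P (idx \<mu>))"
  by (metis mset_filter mset_sorted_list_of_multiset size_mset)

text \<open>Two descriptions of "mu is dominated by i": mu contains a submonomial
  x_{k_1}...x_{k_s} with k_j <= i_j, or the sorted indices of mu are entrywise at most i.
  The first is invariant under the generating rules of Borel, the second is canonical.\<close>

definition dominated_sub :: "nat list \<Rightarrow> nat multiset \<Rightarrow> bool" where
  "dominated_sub i \<mu> \<longleftrightarrow>
     (\<exists>k. length k = length i \<and> mset k \<subseteq># \<mu> \<and> (\<forall>j<length i. k!j \<le> i!j))"

definition dominated :: "nat list \<Rightarrow> nat multiset \<Rightarrow> bool" where
  "dominated i \<mu> \<longleftrightarrow> length i \<le> size \<mu> \<and> (\<forall>j<length i. idx \<mu> ! j \<le> i!j)"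

lemma Borel_subset_monomials:
  assumes "set i \<subseteq> {1..n}" "\<mu> \<in> Borel n (mset i)"
  shows "\<mu> \<in> monomials n"
  using assms(2)
proof induct
  case gen then show ?case using assms(1) by (auto simp: monomials_def)
next
  case (mult \<mu> j) then show ?case by (auto simp: monomials_def)
next
  case (move \<mu> b a)
  then have "b \<le> n" by (auto simp: monomials_def)
  with move show ?case by (auto simp: monomials_def dest: in_diffD)
qed

text \<open>A Borel move x_a/x_b (a < b) keeps a dominated submonomial: if x_b occurs in the
  witness, replace it by x_a; otherwise the witness survives untouched.\<close>

lemma dominated_sub_move:
  assumes dom: "dominated_sub i \<mu>" and "b \<in># \<mu>" "a < b"
  shows "dominated_sub i (\<mu> - {#b#} + {#a#})"
proof -
  from dom obtain k where k: "length k = length i" "mset k \<subseteq># \<mu>" "\<forall>j<length i. k!j \<le> i!j"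
    unfolding dominated_sub_def by blast
  show ?thesis
  proof (cases "b \<in> set k")
    case True
    then obtain p where p: "p < length k" "k!p = b" by (auto simp: in_set_conv_nth)
    define k' where "k' = k[p := a]"
    have "mset k' = mset k - {#b#} + {#a#}" using p by (simp add: k'_def mset_update)
    moreover have "mset k - {#b#} \<subseteq># \<mu> - {#b#}"
      using k(2) by (simp add: subseteq_mset_def diff_le_mono)
    ultimately have "mset k' \<subseteq># \<mu> - {#b#} + {#a#}" by simp
    moreover have "k'!j \<le> i!j" if "j < length i" for j
      using k(1,3) p \<open>a < b\<close> that by (cases "j = p") (auto simp: k'_def)
    moreover have "length k' = length i" using k by (simp add: k'_def)
    ultimately show ?thesis unfolding dominated_sub_def by blast
  next
    case False
    then have "b \<notin># mset k" by simp
    then have "mset k \<subseteq># \<mu> - {#b#}"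
      using k(2) by (metis Diff_eq_empty_iff_mset diff_empty insert_DiffM minus_add_mset_if_not_in_lhs)
    then have "mset k \<subseteq># \<mu> - {#b#} + {#a#}"
      by (meson subset_mset.order_trans mset_subset_eq_add_left)
    then show ?thesis using k unfolding dominated_sub_def by blast
  qed
qed

lemma Borel_dominated_sub:
  assumes "\<mu> \<in> Borel n (mset i)"
  shows "dominated_sub i \<mu>"
  using assms
proof induct
  case gen show ?case unfolding dominated_sub_def by (rule exI[of _ i]) auto
next
  case (mult \<mu> j) then show ?case unfolding dominated_sub_def
    by (meson subset_mset.order_trans mset_subset_eq_add_left)
next
  case (move \<mu> b a) then show ?case by (blast intro: dominated_sub_move)
qed

text \<open>Conversely, m can be moved into any dominated x_{k_1}...x_{k_s} one variable at a
  time, and Borel(m) is an ideal.\<close>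

lemma Borel_replace_prefix:
  assumes "length k = length i" "\<forall>j<length i. k!j \<le> i!j" "set k \<subseteq> {1..n}"
  shows "mset (take j k @ drop j i) \<in> Borel n (mset i)"
proof (induction j)
  case 0 then show ?case by (simp add: Borel.gen)
next
  case (Suc j)
  show ?case
  proof (cases "j < length i")
    case False
    then show ?thesis using Suc assms(1) by simp
  next
    case True
    define M where "M = mset (take j k @ drop (Suc j) i)"
    have old: "mset (take j k @ drop j i) = M + {#i!j#}"
      using True by (simp add: M_def Cons_nth_drop_Suc[symmetric])
    have new: "mset (take (Suc j) k @ drop (Suc j) i) = M + {#k!j#}"
      using True assms(1) by (simp add: M_def take_Suc_conv_app_nth)
    have "k!j \<in> set k" using True assms(1) by simp
    then have "1 \<le> k!j" using assms(3) by auto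
    show ?thesis
    proof (cases "k!j = i!j")
      case True then show ?thesis using Suc old new by metis
    next
      case False
      then have "k!j < i!j" using assms(2) \<open>j < length i\<close> by (simp add: order.not_eq_order_implies_strict)
      have "M + {#i!j#} \<in> Borel n (mset i)" using Suc old by metis
      then have "M + {#i!j#} - {#i!j#} + {#k!j#} \<in> Borel n (mset i)"
        by (rule Borel.move) (use \<open>1 \<le> k!j\<close> \<open>k!j < i!j\<close> in auto)
      then show ?thesis using new by simp
    qed
  qed
qed

lemma Borel_add:
  assumes "\<nu> \<in> Borel n m" "set_mset \<rho> \<subseteq> {1..n}"
  shows "\<nu> + \<rho> \<in> Borel n m"
  using assms(2)
proof (induction \<rho>)
  case empty then show ?case using assms(1) by simp
next
  case (add x \<rho>)
  then have "\<nu> + \<rho> + {#x#} \<in> Borel n m" by (intro Borel.mult) auto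
  then show ?case by simp
qed

lemma Borel_eq_dominated_sub:
  assumes "set i \<subseteq> {1..n}"
  shows "Borel n (mset i) = {\<mu> \<in> monomials n. dominated_sub i \<mu>}"
proof safe
  fix \<mu> assume "\<mu> \<in> Borel n (mset i)"
  then show "\<mu> \<in> monomials n" "dominated_sub i \<mu>"
    using Borel_subset_monomials[OF assms] Borel_dominated_sub by auto
next
  fix \<mu> assume \<mu>: "\<mu> \<in> monomials n" "dominated_sub i \<mu>"
  then obtain k where k: "length k = length i" "mset k \<subseteq># \<mu>" "\<forall>j<length i. k!j \<le> i!j"
    unfolding dominated_sub_def by blast
  have "set k \<subseteq> {1..n}" using k(2) \<mu>(1) unfolding monomials_def
    by (metis mset_subset_eqD set_mset_mset subset_iff mem_Collect_eq)
  then have "mset (take (length i) k @ drop (length i) i) \<in> Borel n (mset i)"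
    by (rule Borel_replace_prefix[OF k(1) k(3)])
  then have "mset k + (\<mu> - mset k) \<in> Borel n (mset i)"
    using k(1) \<mu>(1) by (intro Borel_add) (auto simp: monomials_def dest: in_diffD)
  then show "\<mu> \<in> Borel n (mset i)" using k(2) by simp
qed

lemma sorted_filter_le_nth:
  "sorted xs \<Longrightarrow> j < length (filter (\<lambda>y. y \<le> x) xs) \<Longrightarrow> xs!j \<le> (x::nat)"
proof (induction xs arbitrary: j)
  case Nil then show ?case by simp
next
  case (Cons a ys)
  show ?case
  proof (cases "a \<le> x")
    case True
    then show ?thesis using Cons by (cases j) auto
  next
    case False
    then have "filter (\<lambda>y. y \<le> x) (a # ys) = []" using Cons(2) by (auto simp: filter_empty_conv)
    then show ?thesis using Cons(3) by simp
  qed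
qed

text \<open>For sorted i the two notions agree: a dominated submonomial x_{k_1}...x_{k_s} puts at
  least j+1 indices <= i_j into mu, so the (j+1)-st smallest index of mu is <= i_j; conversely
  the s smallest indices of mu form a witness.\<close>

lemma dominated_sub_iff_dominated:
  assumes "sorted i"
  shows "dominated_sub i \<mu> \<longleftrightarrow> dominated i \<mu>"
proof
  assume "dominated_sub i \<mu>"
  then obtain k where k: "length k = length i" "mset k \<subseteq># \<mu>" "\<forall>j<length i. k!j \<le> i!j"
    unfolding dominated_sub_def by blast
  have "idx \<mu> ! j \<le> i!j" if j: "j < length i" for j
  proof -
    let ?low = "\<lambda>y. y \<le> i!j"
    have "y \<le> i!j" if "y \<in> set (take (Suc j) k)" for y
    proof -
      obtain p where "p \<le> j" "p < length k" "y = k!p"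
        using \<open>y \<in> set (take (Suc j) k)\<close> by (auto simp: in_set_conv_nth less_Suc_eq_le)
      then show ?thesis using k(1,3) j assms by (meson le_less_trans order_trans sorted_nth_mono)
    qed
    then have low: "filter_mset ?low (mset (take (Suc j) k)) = mset (take (Suc j) k)"
      by (simp add: filter_mset_eq_conv)
    have "mset (take (Suc j) k) \<subseteq># \<mu>"
      using mset_take_subseteq k(2) by (rule subset_mset.order_trans)
    from multiset_filter_mono[OF this, of ?low]
    have "mset (take (Suc j) k) \<subseteq># filter_mset ?low \<mu>" by (simp only: low)
    moreover have "size (mset (take (Suc j) k)) = Suc j" using k(1) j by simp
    ultimately have "Suc j \<le> size (filter_mset ?low \<mu>)" by (metis size_mset_mono)
    then show ?thesis
      using sorted_filter_le_nth[of "idx \<mu>" j "i!j"] size_filter_mset_idx by simp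
  qed
  moreover have "length i \<le> size \<mu>" using k size_mset_mono by fastforce
  ultimately show "dominated i \<mu>" unfolding dominated_def by blast
next
  assume "dominated i \<mu>"
  then show "dominated_sub i \<mu>" unfolding dominated_def dominated_sub_def
    by (intro exI[of _ "take (length i) (idx \<mu>)"]) (auto simp: mset_take_idx_subseteq length_idx)
qed

corollary Borel_eq_dominated:
  assumes "sorted i" "set i \<subseteq> {1..n}"
  shows "Borel n (mset i) = {\<mu> \<in> monomials n. dominated i \<mu>}"
  using Borel_eq_dominated_sub[OF assms(2)] dominated_sub_iff_dominated[OF assms(1)] by auto

text \<open>The degree-d monomials of S whose sorted indices are entrywise at most i_1,...,i_d.
  They turn out to be the minimal generators of trunc_d(Borel(m)).\<close>

definition trunc_gens :: "nat \<Rightarrow> nat list \<Rightarrow> nat \<Rightarrow> nat multiset set" where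
  "trunc_gens n i d =
     {\<nu>. set_mset \<nu> \<subseteq> {1..n} \<and> size \<nu> = d \<and> (\<forall>j<d. idx \<nu> ! j \<le> i!j)}"

lemma finite_trunc_gens: "finite (trunc_gens n i d)"
proof -
  have "trunc_gens n i d \<subseteq> multisets_of_size {1..n} d"
    unfolding trunc_gens_def multisets_of_size_def by auto
  then show ?thesis by (rule finite_subset) auto
qed

lemma trunc_gens_0: "trunc_gens n i 0 = {{#}}"
  unfolding trunc_gens_def by auto

lemma idx_add_above:
  assumes "\<nu> \<in> trunc_gens n i d" and above: "\<forall>p<d. \<forall>y\<in>#\<tau>. i!p \<le> y"
  shows "idx (\<nu> + \<tau>) = idx \<nu> @ idx \<tau>"
proof -
  have \<nu>: "length (idx \<nu>) = d" "\<forall>p<d. idx \<nu> ! p \<le> i!p"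
    using assms(1) unfolding trunc_gens_def by (simp_all add: length_idx)
  have "x \<le> y" if "x \<in> set (idx \<nu>)" "y \<in> set (idx \<tau>)" for x y
  proof -
    from that(1) obtain p where p: "p < length (idx \<nu>)" "x = idx \<nu> ! p"
      by (metis in_set_conv_nth)
    then have "x \<le> i!p" using \<nu> by simp
    also have "i!p \<le> y" using above p(1) \<nu>(1) that(2) by simp
    finally show ?thesis .
  qed
  then have "sorted (idx \<nu> @ idx \<tau>)" by (simp add: sorted_append)
  then show ?thesis using idx_mset_sorted[of "idx \<nu> @ idx \<tau>"] by simp
qed

text \<open>The d-truncations of Borel(m) are exactly the generators trunc_gens: truncating keeps
  the bounds on the first d indices, and nu * x_{i_{d+1}} ... x_{i_s} lies in Borel(m) and
  truncates back to nu.\<close>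

lemma trunc_dominated:
  assumes "sorted i" "set i \<subseteq> {1..n}" "d \<le> length i"
  shows "trunc_mono d ` {\<mu> \<in> monomials n. dominated i \<mu>} = trunc_gens n i d"
proof (intro equalityI subsetI)
  fix x assume "x \<in> trunc_mono d ` {\<mu> \<in> monomials n. dominated i \<mu>}"
  then obtain \<mu> where \<mu>: "\<mu> \<in> monomials n" "dominated i \<mu>" and x: "x = trunc_mono d \<mu>"
    by blast
  have "idx x = take d (idx \<mu>)" unfolding x trunc_mono_def
    by (rule idx_mset_sorted) (simp add: sorted_wrt_take)
  moreover have "set_mset x \<subseteq> set_mset \<mu>"
    unfolding x trunc_mono_def using set_take_subset[of d "idx \<mu>"] by simp
  ultimately show "x \<in> trunc_gens n i d"
    using \<mu> assms(3) unfolding trunc_gens_def dominated_def monomials_def x trunc_mono_def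
    by (auto simp: length_idx)
next
  fix \<nu> assume \<nu>: "\<nu> \<in> trunc_gens n i d"
  have "idx \<nu> ! p \<le> i!p" "length (idx \<nu>) = d" if "p < d" for p
    using \<nu> that by (auto simp: trunc_gens_def length_idx)
  define \<mu> where "\<mu> = \<nu> + mset (drop d i)"
  have "\<forall>p<d. \<forall>y\<in>#mset (drop d i). i!p \<le> y"
    using assms(1) by (auto simp: in_set_conv_nth less_diff_conv intro!: sorted_nth_mono)
  then have idx_\<mu>: "idx \<mu> = idx \<nu> @ drop d i"
    using idx_add_above[OF \<nu>] assms(1) by (simp add: \<mu>_def sorted_sort_id sorted_wrt_drop)
  have len: "length (idx \<nu>) = d" using \<nu> by (simp add: trunc_gens_def length_idx)
  have "dominated i \<mu>" unfolding dominated_def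
  proof
    show "length i \<le> size \<mu>" using \<nu> assms(3) by (simp add: \<mu>_def trunc_gens_def)
    show "\<forall>j<length i. idx \<mu> ! j \<le> i ! j"
      using \<nu> len by (auto simp: idx_\<mu> nth_append trunc_gens_def)
  qed
  moreover have "\<mu> \<in> monomials n"
    using \<nu> assms(2) by (auto simp: \<mu>_def monomials_def trunc_gens_def dest: in_set_dropD)
  moreover have "trunc_mono d \<mu> = \<nu>" unfolding trunc_mono_def idx_\<mu> using len by simp
  ultimately show "\<nu> \<in> trunc_mono d ` {\<mu> \<in> monomials n. dominated i \<mu>}" by blast
qed

lemma min_gens_equidegree:
  assumes "G \<subseteq> monomials n" "\<forall>g\<in>G. size g = d"
  shows "{\<mu> \<in> min_gens (ideal_gen n G). size \<mu> = d} = G"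
proof (intro equalityI subsetI)
  fix \<mu> assume "\<mu> \<in> {\<mu> \<in> min_gens (ideal_gen n G). size \<mu> = d}"
  then have \<mu>: "\<mu> \<in> ideal_gen n G" "\<forall>\<nu>\<in>ideal_gen n G. \<nu> \<subseteq># \<mu> \<longrightarrow> \<nu> = \<mu>"
    by (auto simp: min_gens_def)
  then obtain g where g: "g \<in> G" "g \<subseteq># \<mu>" unfolding ideal_gen_def by blast
  then have "g \<in> ideal_gen n G" using assms(1) unfolding ideal_gen_def by blast
  then show "\<mu> \<in> G" using \<mu>(2) g by metis
next
  fix \<mu> assume \<mu>: "\<mu> \<in> G"
  have "\<nu> = \<mu>" if \<nu>: "\<nu> \<in> ideal_gen n G" "\<nu> \<subseteq># \<mu>" for \<nu>
  proof -
    obtain g where g: "g \<in> G" "g \<subseteq># \<nu>" using \<nu>(1) unfolding ideal_gen_def by blast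
    then have "g \<subseteq># \<mu>" "size g = size \<mu>"
      using \<nu>(2) assms(2) \<mu> by (auto intro: subset_mset.order_trans)
    then have "g = \<mu>" by (metis mset_subset_size subset_mset.le_imp_less_or_eq less_irrefl)
    then show ?thesis using g(2) \<nu>(2) by (simp add: subset_mset.antisym)
  qed
  moreover have "\<mu> \<in> ideal_gen n G" using \<mu> assms(1) unfolding ideal_gen_def by blast
  ultimately show "\<mu> \<in> {\<mu> \<in> min_gens (ideal_gen n G). size \<mu> = d}"
    using assms(2) \<mu> by (auto simp: min_gens_def)
qed

corollary degree_min_gens_trunc_Borel:
  assumes "sorted i" "set i \<subseteq> {1..n}" "d \<le> length i"
  shows "{\<mu> \<in> min_gens (trunc_ideal n d (Borel n (mset i))). size \<mu> = d} = trunc_gens n i d"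
proof -
  have "trunc_ideal n d (Borel n (mset i)) = ideal_gen n (trunc_gens n i d)"
    unfolding trunc_ideal_def Borel_eq_dominated[OF assms(1,2)] trunc_dominated[OF assms] ..
  moreover have "trunc_gens n i d \<subseteq> monomials n" "\<forall>g\<in>trunc_gens n i d. size g = d"
    unfolding trunc_gens_def monomials_def by auto
  ultimately show ?thesis using min_gens_equidegree by simp
qed

definition standard_block :: "nat \<Rightarrow> nat list \<Rightarrow> nat \<Rightarrow> nat \<Rightarrow> nat multiset set" where
  "standard_block n i d D =
     (\<lambda>(\<nu>, \<tau>). \<nu> + \<tau>) ` (trunc_gens n i d \<times> multisets_of_size {i!d<..n} (D - d))"

lemma idx_block:
  assumes "sorted i" "d < length i" "\<nu> \<in> trunc_gens n i d" "set_mset \<tau> \<subseteq> {i!d<..n}"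
  shows "idx (\<nu> + \<tau>) = idx \<nu> @ idx \<tau>"
proof (rule idx_add_above[OF assms(3)], intro allI impI ballI)
  fix p y assume "p < d" "y \<in># \<tau>"
  then have "i!p \<le> i!d" "i!d < y" using assms by (auto intro: sorted_nth_mono)
  then show "i!p \<le> y" by simp
qed

lemma block_index_exceeds:
  assumes "sorted i" "d < length i" "\<nu> \<in> trunc_gens n i d"
    and "\<tau> \<in> multisets_of_size {i!d<..n} r" "0 < r"
  shows "i!d < idx (\<nu> + \<tau>) ! d"
proof -
  have \<tau>: "set_mset \<tau> \<subseteq> {i!d<..n}" "size \<tau> = r" using assms(4) by (auto simp: multisets_of_size_def)
  then have "idx \<tau> \<noteq> []" using assms(5) length_idx[of \<tau>] by auto
  then have "idx \<tau> ! 0 \<in># \<tau>" by (metis nth_mem length_greater_0_conv set_sorted_list_of_multiset)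
  moreover have "length (idx \<nu>) = d" using assms(3) by (simp add: trunc_gens_def length_idx)
  ultimately show ?thesis using idx_block[OF assms(1-3) \<tau>(1)] \<tau>(1) by (auto simp: nth_append)
qed

text \<open>Every standard monomial of degree D lies in the block of the first position d where
  its sorted indices exceed i (or run out).\<close>

lemma nondominated_in_block:
  assumes "\<mu> \<in> monomials n" "size \<mu> = D" "\<not> dominated i \<mu>"
  shows "\<exists>d. d < length i \<and> d \<le> D \<and> \<mu> \<in> standard_block n i d D"
proof -
  define xs where "xs = idx \<mu>"
  have xs: "length xs = D" "sorted xs" "set xs = set_mset \<mu>"
    using assms(2) by (simp_all add: xs_def length_idx)
  define fails where "fails = (\<lambda>j. j < length i \<and> (D \<le> j \<or> i!j < xs!j))"
  have "\<exists>j. fails j"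
    using assms(2,3) unfolding fails_def dominated_def xs_def
    by (cases "length i \<le> D") (auto simp: not_le)
  then obtain d where d: "fails d" "\<forall>j<d. \<not> fails j" by (metis exists_least_iff)
  have before: "j < D \<and> xs!j \<le> i!j" if "j < d" for j
    using d that unfolding fails_def by auto
  have "d \<le> D" using before[of D] by (cases "d \<le> D") auto
  define \<nu> \<tau> where "\<nu> = mset (take d xs)" and "\<tau> = mset (drop d xs)"
  have "\<mu> = \<nu> + \<tau>" unfolding \<nu>_def \<tau>_def xs_def
    by (metis mset_append append_take_drop_id mset_sorted_list_of_multiset)
  moreover have "\<nu> \<in> trunc_gens n i d"
  proof -
    have "idx \<nu> = take d xs" unfolding \<nu>_def using xs(2) by (simp add: sorted_sort_id sorted_wrt_take)
    then show ?thesis using assms(1) xs before \<open>d \<le> D\<close> set_take_subset[of d xs]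
      by (auto simp: trunc_gens_def \<nu>_def monomials_def)
  qed
  moreover have "\<tau> \<in> multisets_of_size {i!d<..n} (D - d)"
  proof -
    have "i!d < y" if "y \<in> set (drop d xs)" for y
    proof -
      from that obtain q where "q < length (drop d xs)" "y = drop d xs ! q"
        by (metis in_set_conv_nth)
      then have "d + q < D" "y = xs ! (d + q)" using xs(1) by auto
      moreover have "i!d < xs!d" using d(1) \<open>d + q < D\<close> unfolding fails_def by auto
      moreover have "xs!d \<le> xs!(d+q)" using xs \<open>d + q < D\<close> by (intro sorted_nth_mono) auto
      ultimately show ?thesis by simp
    qed
    moreover have "set (drop d xs) \<subseteq> {1..n}"
      using assms(1) xs(3) set_drop_subset[of d xs] by (auto simp: monomials_def)
    ultimately show ?thesis using xs(1) by (auto simp: \<tau>_def multisets_of_size_def)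
  qed
  ultimately show ?thesis using d(1) \<open>d \<le> D\<close> unfolding fails_def standard_block_def by blast
qed

lemma block_nondominated:
  assumes "sorted i" "d < length i" "d \<le> D" "\<mu> \<in> standard_block n i d D"
  shows "\<mu> \<in> monomials n \<and> size \<mu> = D \<and> \<not> dominated i \<mu>"
proof -
  obtain \<nu> \<tau> where \<nu>: "\<nu> \<in> trunc_gens n i d" and \<tau>: "\<tau> \<in> multisets_of_size {i!d<..n} (D - d)"
    and \<mu>: "\<mu> = \<nu> + \<tau>" using assms(4) unfolding standard_block_def by auto
  have size: "size \<mu> = D" using assms(3) \<nu> \<tau> \<mu> by (simp add: trunc_gens_def multisets_of_size_def)
  have "\<not> dominated i \<mu>"
  proof
    assume dom: "dominated i \<mu>"
    then have "0 < D - d" using size assms(2) unfolding dominated_def by simp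
    then have "i!d < idx \<mu> ! d" using block_index_exceeds[OF assms(1,2) \<nu> \<tau>] \<mu> by simp
    then show False using dom assms(2) unfolding dominated_def by (metis not_le)
  qed
  moreover have "\<mu> \<in> monomials n"
    using \<nu> \<tau> \<mu> by (auto simp: monomials_def trunc_gens_def multisets_of_size_def)
  ultimately show ?thesis using size by blast
qed

text \<open>Blocks are disjoint: elements of block d2 satisfy the bounds at all positions below
  d2, while elements of block d1 < d2 violate the bound at position d1.\<close>

lemma standard_blocks_disjoint:
  assumes "sorted i" "d1 < d2" "d2 < length i" "d2 \<le> D"
  shows "standard_block n i d1 D \<inter> standard_block n i d2 D = {}"
proof -
  have "\<not> dominated (take d2 i) \<mu>" if in_block: "\<mu> \<in> standard_block n i d1 D" for \<mu>
  proof -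
    obtain \<nu> \<tau> where \<nu>: "\<nu> \<in> trunc_gens n i d1"
      and \<tau>: "\<tau> \<in> multisets_of_size {i!d1<..n} (D - d1)" and \<mu>: "\<mu> = \<nu> + \<tau>"
      using in_block unfolding standard_block_def by auto
    have "i!d1 < idx \<mu> ! d1" using block_index_exceeds[OF assms(1) _ \<nu> \<tau>] \<mu> assms by simp
    then show ?thesis using assms(2,3) unfolding dominated_def by (auto simp: not_le)
  qed
  moreover have "dominated (take d2 i) \<mu>" if in_block: "\<mu> \<in> standard_block n i d2 D" for \<mu>
  proof -
    obtain \<nu> \<tau> where \<nu>: "\<nu> \<in> trunc_gens n i d2"
      and \<tau>: "set_mset \<tau> \<subseteq> {i!d2<..n}" and \<mu>: "\<mu> = \<nu> + \<tau>"
      using in_block unfolding standard_block_def multisets_of_size_def by auto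
    have "idx \<mu> = idx \<nu> @ idx \<tau>" using idx_block[OF assms(1,3) \<nu> \<tau>] \<mu> by simp
    then show ?thesis using \<nu> \<mu> assms(3)
      by (auto simp: dominated_def trunc_gens_def nth_append length_idx)
  qed
  ultimately show ?thesis by blast
qed

text \<open>Block d is in bijection with pairs (nu, tau), so its size is c_d times the number of
  degree-(D - d) monomials in n - i_{d+1} variables.\<close>

lemma card_standard_block:
  assumes "sorted i" "d < length i"
  shows "card (standard_block n i d D) = card (trunc_gens n i d) * ((n - i!d) + (D - d) - 1 choose (D - d))"
proof -
  have "inj_on (\<lambda>(\<nu>, \<tau>). \<nu> + \<tau>) (trunc_gens n i d \<times> multisets_of_size {i!d<..n} (D - d))"
  proof (rule inj_onI, clarify)
    fix \<nu> \<tau> \<nu>' \<tau>'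
    assume \<nu>: "\<nu> \<in> trunc_gens n i d" "\<nu>' \<in> trunc_gens n i d"
      and \<tau>: "\<tau> \<in> multisets_of_size {i!d<..n} (D - d)" "\<tau>' \<in> multisets_of_size {i!d<..n} (D - d)"
      and eq: "\<nu> + \<tau> = \<nu>' + \<tau>'"
    have "idx (\<nu> + \<tau>) = idx \<nu> @ idx \<tau>" "idx (\<nu>' + \<tau>') = idx \<nu>' @ idx \<tau>'"
      using idx_block[OF assms \<nu>(1)] idx_block[OF assms \<nu>(2)] \<tau>
      by (simp_all add: multisets_of_size_def)
    then have "idx \<nu> @ idx \<tau> = idx \<nu>' @ idx \<tau>'" using eq by simp
    moreover have "length (idx \<nu>) = length (idx \<nu>')" using \<nu> by (simp add: trunc_gens_def length_idx)
    ultimately have "idx \<nu> = idx \<nu>'" "idx \<tau> = idx \<tau>'" by auto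
    then show "\<nu> = \<nu>' \<and> \<tau> = \<tau>'" by (metis mset_sorted_list_of_multiset)
  qed
  from card_image[OF this] show ?thesis unfolding standard_block_def
    by (simp add: card_cartesian_product card_multisets_of_size)
qed

theorem card_standard_monomials_Borel:
  assumes "sorted i" "set i \<subseteq> {1..n}"
  shows "card {\<mu> \<in> monomials n. size \<mu> = D \<and> \<mu> \<notin> Borel n (mset i)} =
    (\<Sum>d\<in>{d. d < length i \<and> d \<le> D}. card (trunc_gens n i d) * ((n - i!d) + (D - d) - 1 choose (D - d)))"
proof -
  let ?ds = "{d. d < length i \<and> d \<le> D}"
  have "{\<mu> \<in> monomials n. size \<mu> = D \<and> \<mu> \<notin> Borel n (mset i)} =
        {\<mu> \<in> monomials n. size \<mu> = D \<and> \<not> dominated i \<mu>}"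
    using Borel_eq_dominated[OF assms] by auto
  also have "\<dots> = (\<Union>d\<in>?ds. standard_block n i d D)"
  proof (intro equalityI subsetI)
    fix \<mu> assume "\<mu> \<in> {\<mu> \<in> monomials n. size \<mu> = D \<and> \<not> dominated i \<mu>}"
    then obtain d where "d \<in> ?ds" "\<mu> \<in> standard_block n i d D"
      using nondominated_in_block[of \<mu> n D i] by auto
    then show "\<mu> \<in> (\<Union>d\<in>?ds. standard_block n i d D)" by blast
  next
    fix \<mu> assume "\<mu> \<in> (\<Union>d\<in>?ds. standard_block n i d D)"
    then obtain d where "d \<in> ?ds" "\<mu> \<in> standard_block n i d D" by blast
    then show "\<mu> \<in> {\<mu> \<in> monomials n. size \<mu> = D \<and> \<not> dominated i \<mu>}"
      using block_nondominated[OF assms(1)] by auto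
  qed
  finally have "{\<mu> \<in> monomials n. size \<mu> = D \<and> \<mu> \<notin> Borel n (mset i)} =
                (\<Union>d\<in>?ds. standard_block n i d D)" .
  moreover have "card (\<Union>d\<in>?ds. standard_block n i d D) = (\<Sum>d\<in>?ds. card (standard_block n i d D))"
  proof (rule card_UN_disjoint)
    show "\<forall>d\<in>?ds. finite (standard_block n i d D)"
      unfolding standard_block_def by (auto intro!: finite_trunc_gens finite_multisets_of_size)
    show "\<forall>d1\<in>?ds. \<forall>d2\<in>?ds. d1 \<noteq> d2 \<longrightarrow> standard_block n i d1 D \<inter> standard_block n i d2 D = {}"
    proof (intro ballI impI)
      fix d1 d2 assume "d1 \<in> ?ds" "d2 \<in> ?ds" "d1 \<noteq> d2"
      then show "standard_block n i d1 D \<inter> standard_block n i d2 D = {}"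
        using standard_blocks_disjoint[OF assms(1), of d1 d2 D n]
          standard_blocks_disjoint[OF assms(1), of d2 d1 D n]
        by (cases "d1 < d2") (auto simp: Int_commute)
    qed
  qed simp
  ultimately show ?thesis using card_standard_block[OF assms(1)] by simp
qed

text \<open>Formal power series over a field with denominators (1-t)^k.  Since (1-t)^k has
  constant term 1, division by it is multiplication by its inverse.\<close>

unbundle fps_syntax

lemma one_minus_X_power_nth_0: "((1 - fps_X :: 'a::field fps) ^ k) $ 0 \<noteq> 0"
  by (simp add: fps_nth_power_0)

lemma fps_div_one_minus_X_power_mult:
  "F / (1 - fps_X :: 'a::field fps) ^ k * (1 - fps_X) ^ k = F"
  by (simp add: fps_divide_unit[OF one_minus_X_power_nth_0] mult.assoc
      inverse_mult_eq_1[OF one_minus_X_power_nth_0])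

lemma fps_mult_one_minus_X_power_div:
  "F * (1 - fps_X :: 'a::field fps) ^ k / (1 - fps_X) ^ k = F"
  by (simp add: fps_divide_unit[OF one_minus_X_power_nth_0] mult.assoc
      inverse_mult_eq_1'[OF one_minus_X_power_nth_0])

text \<open>1/(1-t)^k = sum_r binom(k+r-1, r) t^r, hence the coefficients of c t^d/(1-t)^k.\<close>

lemma fps_X_power_div_one_minus_X_power_nth:
  "(fps_const (c :: 'a::field_char_0) * fps_X ^ d / (1 - fps_X) ^ k) $ D =
     (if d \<le> D then c * of_nat ((k + (D - d) - 1) choose (D - d)) else 0)"
proof -
  have inv: "inverse ((1 - fps_X :: 'a fps) ^ k) $ r = of_nat ((k + r - 1) choose r)" for r
  proof (cases "k = 0")
    case True then show ?thesis by (cases r) auto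
  next
    case False then show ?thesis using one_minus_const_fps_X_neg_power'[of k "1::'a"] by simp
  qed
  have "fps_const c * fps_X ^ d / (1 - fps_X) ^ k = fps_const c * (fps_X ^ d * inverse ((1 - fps_X) ^ k))"
    by (simp add: fps_divide_unit[OF one_minus_X_power_nth_0] mult.assoc)
  then show ?thesis by (simp add: fps_X_power_mult_nth inv)
qed

theorem hilbert_series_Borel:
  assumes "sorted i" "set i \<subseteq> {1..n}"
  defines "c \<equiv> (\<lambda>d. card {\<mu> \<in> min_gens (trunc_ideal n d (Borel n (mset i))). size \<mu> = d})"
  shows "hilbert_series n (Borel n (mset i)) =
           (\<Sum>d<length i. fps_const (of_nat (c d)) * fps_X ^ d / (1 - fps_X) ^ (n - i ! d))"
    (is "_ = ?R")
proof (rule fps_ext)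
  fix D
  let ?ds = "{d. d < length i \<and> d \<le> D}"
  let ?b = "\<lambda>d. (n - i!d) + (D - d) - 1 choose (D - d)"
  have c: "c d = card (trunc_gens n i d)" if "d < length i" for d
    unfolding c_def using degree_min_gens_trunc_Borel[OF assms(1,2)] that by simp
  have "hilbert_series n (Borel n (mset i)) $ D = of_nat (\<Sum>d\<in>?ds. card (trunc_gens n i d) * ?b d)"
    unfolding hilbert_series_def using card_standard_monomials_Borel[OF assms(1,2)] by simp
  also have "\<dots> = (\<Sum>d\<in>{d \<in> {..<length i}. d \<le> D}. of_nat (c d) * of_nat (?b d))"
    by (simp add: of_nat_sum c conj_commute)
  also have "\<dots> = (\<Sum>d<length i. if d \<le> D then of_nat (c d) * of_nat (?b d) else 0)"
    by (rule sum.inter_filter) simp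
  also have "\<dots> = ?R $ D" by (simp add: fps_sum_nth fps_X_power_div_one_minus_X_power_nth)
  finally show "hilbert_series n (Borel n (mset i)) $ D = ?R $ D" .
qed

text \<open>The polynomial 1 - t and the uniqueness of a representation Q/(1-t)^delta with Q(1) /= 0:
  cross-multiplying gives Q (1-t)^delta' = Q' (1-t)^delta, and an excess factor (1-t) on
  either side would force Q(1) = 0 or Q'(1) = 0.\<close>

definition one_minus_t :: "'a::comm_ring_1 poly" where
  "one_minus_t = 1 - [:0, 1:]"

lemma fps_of_poly_one_minus_t: "fps_of_poly one_minus_t = 1 - fps_X"
  by (simp add: one_minus_t_def fps_of_poly_diff)

lemma poly_one_minus_t_1: "poly one_minus_t 1 = 0"
  by (simp add: one_minus_t_def)

lemma one_minus_t_power_nonzero: "(one_minus_t :: 'a::idom poly) ^ k \<noteq> 0"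
proof -
  have "coeff (one_minus_t :: 'a poly) 0 = 1" by (simp add: one_minus_t_def)
  then show ?thesis by (intro power_not_zero) auto
qed

lemma one_minus_t_exponent_le:
  fixes Q Q' :: "'a::idom poly"
  assumes "Q * one_minus_t ^ a = Q' * one_minus_t ^ b" "poly Q 1 \<noteq> 0"
  shows "b \<le> a"
proof (rule ccontr)
  assume "\<not> b \<le> a"
  then have "Q * one_minus_t ^ a = (Q' * one_minus_t ^ (b - a)) * one_minus_t ^ a"
    using assms(1) by (metis mult.assoc power_add le_add_diff_inverse2 nat_le_linear)
  then have "Q = Q' * one_minus_t ^ (b - a)"
    using one_minus_t_power_nonzero by (metis mult_right_cancel)
  then have "poly Q 1 = 0" using \<open>\<not> b \<le> a\<close> by (simp add: poly_one_minus_t_1)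
  with assms(2) show False by simp
qed

lemma fps_div_one_minus_X_power_unique:
  fixes Q Q' :: "'a::field poly"
  assumes "poly Q 1 \<noteq> 0" "poly Q' 1 \<noteq> 0"
    and "fps_of_poly Q / (1 - fps_X) ^ \<delta> = fps_of_poly Q' / (1 - fps_X) ^ \<delta>'"
  shows "\<delta> = \<delta>' \<and> Q = Q'"
proof -
  have "fps_of_poly (Q * one_minus_t ^ \<delta>') = fps_of_poly (Q' * one_minus_t ^ \<delta>)"
    using arg_cong[OF assms(3), of "\<lambda>F. F * (1 - fps_X) ^ \<delta> * (1 - fps_X) ^ \<delta>'"]
    by (simp add: fps_of_poly_mult fps_of_poly_power fps_of_poly_one_minus_t
        fps_div_one_minus_X_power_mult mult_ac)
  then have eq: "Q * one_minus_t ^ \<delta>' = Q' * one_minus_t ^ \<delta>" by (simp only: fps_of_poly_eq_iff)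
  then have "\<delta> = \<delta>'" using one_minus_t_exponent_le[OF eq assms(1)]
    one_minus_t_exponent_le[OF eq[symmetric] assms(2)] by simp
  then show ?thesis using eq one_minus_t_power_nonzero by (metis mult_right_cancel)
qed

lemma multiplicity_eqI:
  assumes "poly Q 1 \<noteq> 0" "H = fps_of_poly Q / (1 - fps_X) ^ \<delta>"
  shows "multiplicity H = poly Q 1"
  unfolding multiplicity_def
proof (rule the_equality)
  show "\<exists>Q' \<delta>'. poly Q' 1 \<noteq> 0 \<and> H = fps_of_poly Q' / (1 - fps_X) ^ \<delta>' \<and> poly Q 1 = poly Q' 1"
    using assms by blast
next
  fix e assume "\<exists>Q' \<delta>'. poly Q' 1 \<noteq> 0 \<and> H = fps_of_poly Q' / (1 - fps_X) ^ \<delta>' \<and> e = poly Q' 1"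
  then show "e = poly Q 1" using fps_div_one_minus_X_power_unique[OF assms(1)] assms(2) by metis
qed

lemma fps_sum_common_denominator:
  fixes F :: "'b \<Rightarrow> 'a::field fps"
  assumes "\<forall>d\<in>A. k d \<le> K"
  shows "(\<Sum>d\<in>A. F d / (1 - fps_X) ^ k d) =
           (\<Sum>d\<in>A. F d * (1 - fps_X) ^ (K - k d)) / (1 - fps_X) ^ K"
proof -
  have "F d / (1 - fps_X) ^ k d * (1 - fps_X) ^ K = F d * (1 - fps_X) ^ (K - k d)" if "d \<in> A" for d
  proof -
    have pow: "(1 - fps_X :: 'a fps) ^ K = (1 - fps_X) ^ k d * (1 - fps_X) ^ (K - k d)"
      using assms that by (simp flip: power_add)
    show ?thesis by (simp only: pow mult.assoc[symmetric] fps_div_one_minus_X_power_mult)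
  qed
  then have "(\<Sum>d\<in>A. F d / (1 - fps_X) ^ k d) * (1 - fps_X) ^ K =
             (\<Sum>d\<in>A. F d * (1 - fps_X) ^ (K - k d))"
    by (simp add: sum_distrib_right)
  then show ?thesis by (metis fps_mult_one_minus_X_power_div)
qed

text \<open>Multiplicity of a rational function sum_d a_d t^d/(1-t)^(k_d) with natural numerators
  whose largest pole order k_0 is attained at d = 0 with a_0 > 0: only the terms of maximal
  pole order contribute.\<close>

lemma multiplicity_sum_X_powers:
  fixes a k :: "nat \<Rightarrow> nat"
  assumes "0 < N" "a 0 \<noteq> 0" "\<forall>d<N. k d \<le> k 0"
  shows "multiplicity (\<Sum>d<N. fps_const (of_nat (a d)) * fps_X ^ d / (1 - fps_X) ^ k d) =
           of_nat (\<Sum>d\<in>{d. d < N \<and> k d = k 0}. a d)"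
proof -
  define Q :: "rat poly" where "Q = (\<Sum>d<N. monom (of_nat (a d)) d * one_minus_t ^ (k 0 - k d))"
  have HQ: "(\<Sum>d<N. fps_const (of_nat (a d)) * fps_X ^ d / (1 - fps_X) ^ k d) =
          fps_of_poly Q / (1 - fps_X) ^ k 0"
    using assms(3) by (simp add: fps_sum_common_denominator Q_def fps_of_poly_sum fps_of_poly_mult
        fps_of_poly_power fps_of_poly_monom fps_of_poly_one_minus_t)
  have "poly Q 1 = (\<Sum>d<N. of_nat (a d) * 0 ^ (k 0 - k d))"
    by (simp add: Q_def poly_sum poly_mult poly_power poly_monom poly_one_minus_t_1)
  also have "\<dots> = (\<Sum>d<N. if k d = k 0 then of_nat (a d) else 0)"
    using assms(3) by (intro sum.cong) auto
  finally have Q1: "poly Q 1 = of_nat (\<Sum>d\<in>{d. d < N \<and> k d = k 0}. a d)"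
    by (simp add: sum.inter_filter[symmetric] of_nat_sum conj_commute lessThan_def)
  have "poly Q 1 \<noteq> 0"
    unfolding Q1 of_nat_eq_0_iff using assms(1,2) by (subst sum_eq_0_iff) auto
  then show ?thesis unfolding HQ Q1[symmetric] by (rule multiplicity_eqI) (rule refl)
qed

theorem proposition4p6:
  fixes n :: nat and i :: "nat list"
  assumes "i \<noteq> []" and "sorted i" and "set i \<subseteq> {1..n}"
  defines "B \<equiv> Borel n (mset i)"
      and "c \<equiv> (\<lambda>d. card {\<mu> \<in> min_gens (trunc_ideal n d (Borel n (mset i))). size \<mu> = d})"
  shows "hilbert_series n B =
           (\<Sum>d<length i. fps_const (of_nat (c d)) * fps_X ^ d / (1 - fps_X) ^ (n - i ! d)) \<and>
         multiplicity (hilbert_series n B) = of_nat (\<Sum>d\<in>{d. d < length i \<and> i ! d = i ! 0}. c d)"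
proof -
  have HS: "hilbert_series n B =
              (\<Sum>d<length i. fps_const (of_nat (c d)) * fps_X ^ d / (1 - fps_X) ^ (n - i ! d))"
    unfolding B_def c_def by (rule hilbert_series_Borel[OF assms(2,3)])
  (* c_0 = 1: the only degree-0 generator of trunc_0(B) is 1 *)
  have "c 0 = 1"
    using degree_min_gens_trunc_Borel[OF assms(2,3), of 0] by (simp add: c_def trunc_gens_0)
  (* the pole order n - i_{d+1} is maximal exactly when i_{d+1} = i_1, as i is sorted and
     bounded by n *)
  moreover have bounds: "i!0 \<le> i!d \<and> i!d \<le> n" if "d < length i" for d
    using assms(2,3) that nth_mem by (fastforce intro: sorted_nth_mono)
  then have "{d. d < length i \<and> n - i!d = n - i!0} = {d. d < length i \<and> i!d = i!0}"
    by fastforce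
  ultimately have "multiplicity (hilbert_series n B) = of_nat (\<Sum>d\<in>{d. d < length i \<and> i ! d = i ! 0}. c d)"
    unfolding HS using multiplicity_sum_X_powers[of "length i" c "\<lambda>d. n - i!d"] assms(1) bounds
    by (simp add: diff_le_mono2)
  with HS show ?thesis by blast
qed

end
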